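(* Let $k\in\{3,4,5,6\}$ and let $\widehat p_0,\dots,\widehat p_4$ be a normalized configuration of 5 distinct points on $S^2$ minimizing $\sum_{i<j}(4-\|\widehat p_i-\widehat p_j\|^2)^k$ among all 5-point configurations on $S^2$. Let $p_i=\Sigma(\widehat p_i)\in\mathbb{R}^2$ for $i=0,1,2,3$. Then $|p_0|<4$ and $|p_i|<3/2$ for $i=1,2,3$.
   Context: $\Sigma(x,y,z)=(x/(1-z),y/(1-z))$ is stereographic projection from $(0,0,1)$. A configuration $\widehat p_0,\dots,\widehat p_4$ is normalized if $\widehat p_4=(0,0,1)$ and $\|\widehat p_4-\widehat p_0\|\le\|\widehat p_4-\widehat p_i\|$ for $i=1,2,3$. *)

theory Defs
  imports "HOL-Analysis.Analysis"
begin

text \<open>Points of R^3 are modelled as real^3; coordinates x,y,z are components 1,2,3.\<close>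

definition S2 :: "(real^3) set" where
  "S2 = {p. norm p = 1}"

definition stereo :: "real^3 \<Rightarrow> real^2" where
  "stereo p = vector [p$1 / (1 - p$3), p$2 / (1 - p$3)]"

definition north :: "real^3" where
  "north = vector [0, 0, 1]"

definition config5 :: "(nat \<Rightarrow> real^3) \<Rightarrow> bool" where
  "config5 P \<longleftrightarrow> inj_on P {..<5} \<and> (\<forall>i<5. P i \<in> S2)"

definition energy :: "nat \<Rightarrow> (nat \<Rightarrow> real^3) \<Rightarrow> real" where
  "energy k P = (\<Sum>j<5. \<Sum>i<j. (4 - (norm (P i - P j))^2) ^ k)"

definition normalized :: "(nat \<Rightarrow> real^3) \<Rightarrow> bool" where
  "normalized P \<longleftrightarrow> P 4 = north \<and>
     (\<forall>i\<in>{1,2,3}. norm (P 4 - P 0) \<le> norm (P 4 - P i))"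

end

theory Submission
  imports Defs
begin

text \<open>
  A minimiser has energy at most that of the triangular bipyramid, \<open>6 \<cdot> 2^k + 3\<close>.
  For unit vectors each pair term is \<open>2 (1 + \<langle>p\<^sub>i, p\<^sub>j\<rangle>) \<ge> 0\<close>, and the term
  pairing \<open>p\<^sub>i\<close> with the north pole is \<open>2 (1 + z\<^sub>i)\<close>. If \<open>z\<^sub>0 \<ge> 15/17\<close> this
  single term exceeds the bound. If \<open>z\<^sub>i \<ge> 5/13\<close> for some \<open>i \<in> {1,2,3}\<close>, then
  \<open>z\<^sub>0 \<ge> z\<^sub>i\<close> by normalisation, so two terms are at least \<open>36/13\<close>; this exceeds the
  bound directly for \<open>k \<ge> 4\<close>, and for \<open>k = 3\<close> once the remaining cubes are
  estimated by a tangent line, using \<open>|\<Sum> p\<^sub>i|\<^sup>2 \<ge> 0\<close>. Finally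
  \<open>|\<Sigma>(p)|\<^sup>2 = (1 + z)/(1 - z)\<close> turns the height bounds into the radii 4 and 3/2.
\<close>

lemma norm_diff_sq_unit:
  fixes a b :: "'a::real_inner"
  assumes "norm a = 1" "norm b = 1"
  shows "(norm (a - b))\<^sup>2 = 2 - 2 * inner a b"
  using dot_norm_neg[of a b] assms by simp

lemma one_plus_inner_unit_nonneg:
  fixes a b :: "'a::real_inner"
  assumes "norm a = 1" "norm b = 1"
  shows "0 \<le> 1 + inner a b"
  using Cauchy_Schwarz_ineq2[of a b] assms by simp

lemma inner_sum_lessThan_self:
  fixes P :: "nat \<Rightarrow> 'a::real_inner"
  shows "inner (\<Sum>i<n. P i) (\<Sum>i<n. P i)
           = (\<Sum>i<n. inner (P i) (P i)) + 2 * (\<Sum>j<n. \<Sum>i<j. inner (P i) (P j))"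
proof (induction n)
  case 0
  show ?case by simp
next
  case (Suc n)
  then show ?case
    by (simp add: inner_add_left inner_add_right inner_sum_left inner_sum_right inner_commute algebra_simps)
qed

lemma sum_pairs_inner_unit_ge:
  fixes P :: "nat \<Rightarrow> 'a::real_inner"
  assumes "\<And>i. i < n \<Longrightarrow> norm (P i) = 1"
  shows "- real n / 2 \<le> (\<Sum>j<n. \<Sum>i<j. inner (P i) (P j))"
proof -
  have "(\<Sum>i<n. inner (P i) (P i)) = real n"
    using assms by (simp add: power2_norm_eq_inner[symmetric])
  then have "0 \<le> real n + 2 * (\<Sum>j<n. \<Sum>i<j. inner (P i) (P j))"
    using inner_sum_lessThan_self[of P n] by (metis inner_ge_zero)
  then show ?thesis by linarith
qed

lemma sum_column_le_sum_pairs: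
  fixes f :: "nat \<Rightarrow> nat \<Rightarrow> real"
  assumes nonneg: "\<And>i j. i < j \<Longrightarrow> j \<le> n \<Longrightarrow> 0 \<le> f i j" and "I \<subseteq> {..<n}"
  shows "(\<Sum>i\<in>I. f i n) \<le> (\<Sum>j<Suc n. \<Sum>i<j. f i j)"
proof -
  have "(\<Sum>i\<in>I. f i n) \<le> (\<Sum>i<n. f i n)"
    using assms by (intro sum_mono2) auto
  moreover have "0 \<le> (\<Sum>j<n. \<Sum>i<j. f i j)"
    using nonneg by (intro sum_nonneg) auto
  ultimately show ?thesis by simp
qed

lemma unit_of_config5: "config5 P \<Longrightarrow> i < 5 \<Longrightarrow> norm (P i) = 1"
  by (simp add: config5_def S2_def)

lemma one_plus_inner_config5_nonneg:
  "config5 P \<Longrightarrow> i < 5 \<Longrightarrow> j < 5 \<Longrightarrow> 0 \<le> 1 + inner (P i) (P j)"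
  by (intro one_plus_inner_unit_nonneg unit_of_config5)

lemma energy_eq_sum_inner:
  assumes "config5 P"
  shows "energy k P = (\<Sum>j<5. \<Sum>i<j. (2 * (1 + inner (P i) (P j))) ^ k)"
  unfolding energy_def
  by (intro sum.cong refl)
     (simp add: norm_diff_sq_unit unit_of_config5[OF assms] algebra_simps)

lemma inner_north: "inner p north = p $ 3"
  by (simp add: north_def inner_vec_def sum_3)

lemma energy_ge_heights:
  assumes "config5 P" "P 4 = north" "I \<subseteq> {..<4}"
  shows "(\<Sum>i\<in>I. (2 * (1 + P i $ 3)) ^ k) \<le> energy k P"
proof -
  have "0 \<le> (2 * (1 + inner (P i) (P j))) ^ k" if "i < j" "j \<le> 4" for i j
    using one_plus_inner_config5_nonneg[OF assms(1), of i j] that by simp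
  then have "(\<Sum>i\<in>I. (2 * (1 + inner (P i) (P 4))) ^ k) \<le> energy k P"
    unfolding energy_eq_sum_inner[OF assms(1)] numeral_nat(3)
    using assms(3) by (intro sum_column_le_sum_pairs)
  then show ?thesis by (simp add: assms(2) inner_north)
qed

lemma norm_sq_vec3: "(norm (p :: real^3))\<^sup>2 = (p$1)\<^sup>2 + (p$2)\<^sup>2 + (p$3)\<^sup>2"
  unfolding power2_norm_eq_inner by (simp add: inner_vec_def sum_3 power2_eq_square)

lemma norm_sq_vec2: "(norm (p :: real^2))\<^sup>2 = (p$1)\<^sup>2 + (p$2)\<^sup>2"
  unfolding power2_norm_eq_inner by (simp add: inner_vec_def sum_2 power2_eq_square)

lemma norm_eq_1_iff_sq: "norm x = 1 \<longleftrightarrow> (norm x)\<^sup>2 = 1"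
  by (smt (verit) norm_ge_zero power2_eq_1_iff)

lemma norm_north: "norm north = 1"
  unfolding norm_eq_1_iff_sq norm_sq_vec3 by (simp add: north_def)

lemma norm_stereo_sq:
  assumes "p \<in> S2" "p$3 \<noteq> 1"
  shows "(norm (stereo p))\<^sup>2 = (1 + p$3) / (1 - p$3)"
proof -
  have "(norm (stereo p))\<^sup>2 = ((p$1)\<^sup>2 + (p$2)\<^sup>2) / (1 - p$3)\<^sup>2"
    unfolding norm_sq_vec2 stereo_def by (simp add: power_divide add_divide_distrib)
  also have "(p$1)\<^sup>2 + (p$2)\<^sup>2 = (1 - p$3) * (1 + p$3)"
    using assms(1) norm_sq_vec3[of p] by (simp add: S2_def algebra_simps power2_eq_square)
  finally show ?thesis
    using assms(2) by (simp add: power2_eq_square)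
qed

lemma norm_stereo_less:
  assumes "p \<in> S2" "p$3 < z" "z < 1" "0 \<le> c" "c\<^sup>2 = (1 + z) / (1 - z)"
  shows "norm (stereo p) < c"
proof -
  have "(1 + p$3) / (1 - p$3) = 2 / (1 - p$3) - 1" "(1 + z) / (1 - z) = 2 / (1 - z) - 1"
    using assms(2,3) by (simp_all add: field_simps)
  moreover have "2 / (1 - p$3) < 2 / (1 - z)"
    using assms(2,3) by (intro divide_strict_left_mono) auto
  ultimately have "(norm (stereo p))\<^sup>2 < c\<^sup>2"
    using assms norm_stereo_sq[OF assms(1)] by auto
  then show ?thesis
    using assms(4) by (rule power_less_imp_less_base)
qed

lemma normalized_height_le:
  assumes "config5 P" "normalized P" "i \<in> {1,2,3}"
  shows "P i $ 3 \<le> P 0 $ 3"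
proof -
  have dist_north: "(norm (north - P j))\<^sup>2 = 2 - 2 * P j $ 3" if "j < 5" for j
    using norm_diff_sq_unit[OF norm_north unit_of_config5[OF assms(1) that]]
    by (metis inner_commute inner_north)
  have "norm (north - P 0) \<le> norm (north - P i)"
    using assms(2,3) by (auto simp: normalized_def)
  then have "(norm (north - P 0))\<^sup>2 \<le> (norm (north - P i))\<^sup>2"
    by (simp add: power_mono)
  then show ?thesis
    using dist_north[of 0] dist_north[of i] assms(3) by auto
qed

definition bipyramid :: "nat \<Rightarrow> real^3" where
  "bipyramid i =
     (if i = 0 then vector [0, 0, 1] else if i = 1 then vector [0, 0, -1]
      else if i = 2 then vector [1, 0, 0]
      else if i = 3 then vector [-1/2, sqrt 3 / 2, 0] else vector [-1/2, -sqrt 3 / 2, 0])"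

lemma bipyramid_dist_sq:
  assumes "i < j" "j < 5"
  shows "(norm (bipyramid i - bipyramid j))\<^sup>2 = (if j = 1 then 4 else if i \<le> 1 then 2 else 3)"
  using assms unfolding norm_sq_vec3
  by (auto simp: bipyramid_def eval_nat_numeral less_Suc_eq power2_eq_square algebra_simps)

lemma config5_bipyramid: "config5 bipyramid"
  unfolding config5_def S2_def
proof
  show "inj_on bipyramid {..<5}"
    by (rule inj_onI)
       (auto simp: bipyramid_def eval_nat_numeral less_Suc_eq vec_eq_iff forall_3 split: if_splits)
  show "\<forall>i<5. bipyramid i \<in> {p. norm p = 1}"
    unfolding mem_Collect_eq norm_eq_1_iff_sq norm_sq_vec3
    by (auto simp: bipyramid_def eval_nat_numeral less_Suc_eq power2_eq_square)
qed

lemma energy_bipyramid: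
  assumes "0 < k"
  shows "energy k bipyramid = 6 * 2 ^ k + 3"
proof -
  have "energy k bipyramid = (\<Sum>j<5::nat. \<Sum>i<j. (if j = 1 then 0 else if i \<le> 1 then 2 else 1 :: real) ^ k)"
    unfolding energy_def by (intro sum.cong refl) (simp add: bipyramid_dist_sq)
  then show ?thesis
    using assms by (simp add: numeral_eq_Suc lessThan_Suc)
qed

text \<open>The excess of \<open>x\<^sup>3\<close> over its tangent line at \<open>6/5\<close>.\<close>
definition cube_excess :: "real \<Rightarrow> real" where
  "cube_excess x = (x - 6/5)\<^sup>2 * (x + 12/5)"

lemma cube_eq_tangent_plus_excess: "x ^ 3 = 108/25 * x - 432/125 + cube_excess x"
  by (simp add: cube_excess_def power2_eq_square power3_eq_cube field_simps)

lemma cube_excess_nonneg: "0 \<le> x \<Longrightarrow> 0 \<le> cube_excess x"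
  by (simp add: cube_excess_def)

lemma cube_excess_mono: "6/5 \<le> x \<Longrightarrow> x \<le> y \<Longrightarrow> cube_excess x \<le> cube_excess y"
  unfolding cube_excess_def by (intro mult_mono power_mono) auto

text \<open>
  Summing the tangent-line bound over all ten pairs and using \<open>\<Sum> w \<ge> 15\<close> gives
  \<open>756/25 = 15 \<cdot> 108/25 - 10 \<cdot> 432/125\<close>; the excesses of the chosen pairs are kept.
\<close>
lemma energy3_ge_heights:
  assumes "config5 P" "P 4 = north" "I \<subseteq> {..<4}"
  shows "756/25 + (\<Sum>i\<in>I. cube_excess (2 * (1 + P i $ 3))) \<le> energy 3 P"
proof -
  define w where "w i j = 2 * (1 + inner (P i) (P j))" for i j
  have w_nonneg: "0 \<le> w i j" if "i < 5" "j < 5" for i j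
    using one_plus_inner_config5_nonneg[OF assms(1) that] by (simp add: w_def)
  have "(\<Sum>j<5::nat. \<Sum>i<j. w i j) = 20 + 2 * (\<Sum>j<5::nat. \<Sum>i<j. inner (P i) (P j))"
    by (simp add: w_def sum.distrib sum_distrib_left numeral_eq_Suc lessThan_Suc)
  moreover have "- 5/2 \<le> (\<Sum>j<5::nat. \<Sum>i<j. inner (P i) (P j))"
    using sum_pairs_inner_unit_ge[of 5 P] unit_of_config5[OF assms(1)] by simp
  ultimately have sum_w: "15 \<le> (\<Sum>j<5::nat. \<Sum>i<j. w i j)" by linarith
  have "(\<Sum>i\<in>I. cube_excess (w i 4)) \<le> (\<Sum>j<5::nat. \<Sum>i<j. cube_excess (w i j))"
    unfolding numeral_nat(3) using assms(3)
    by (intro sum_column_le_sum_pairs cube_excess_nonneg w_nonneg) auto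
  moreover have "energy 3 P
      = (\<Sum>j<5::nat. \<Sum>i<j. 108/25 * w i j - 432/125 + cube_excess (w i j))"
    unfolding energy_eq_sum_inner[OF assms(1)] w_def[symmetric] cube_eq_tangent_plus_excess ..
  moreover have "\<dots> = 108/25 * (\<Sum>j<5::nat. \<Sum>i<j. w i j) - 864/25
      + (\<Sum>j<5::nat. \<Sum>i<j. cube_excess (w i j))"
    by (simp add: sum.distrib sum_subtractf sum_distrib_left numeral_eq_Suc lessThan_Suc)
  ultimately show ?thesis
    using sum_w assms(2) by (simp add: w_def inner_north)
qed

lemma energy_gt_bipyramid_if_high:
  assumes "config5 P" "P 4 = north" "k \<in> {3,4,5,6}" "i < 4" "15/17 \<le> P i $ 3"
  shows "6 * 2 ^ k + 3 < energy k P"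
proof -
  have "(64/17) ^ k \<le> (2 * (1 + P i $ 3)) ^ k"
    using assms(5) by (intro power_mono) auto
  also have "\<dots> \<le> energy k P"
    using energy_ge_heights[OF assms(1,2), of "{i}" k] assms(4) by simp
  finally show ?thesis
    using assms(3) by (auto simp: eval_nat_numeral)
qed

lemma energy_gt_bipyramid_if_two_high:
  assumes "config5 P" "P 4 = north" "k \<in> {3,4,5,6}"
    and "i < 4" "j < 4" "i \<noteq> j" "5/13 \<le> P i $ 3" "5/13 \<le> P j $ 3"
  shows "6 * 2 ^ k + 3 < energy k P"
proof -
  have ij: "{i, j} \<subseteq> {..<4}" using assms(4,5) by auto
  have high: "36/13 \<le> 2 * (1 + P l $ 3)" if "l \<in> {i, j}" for l
    using that assms(7,8) by auto
  consider "k = 3" | "k \<in> {4,5,6}" using assms(3) by auto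
  then show ?thesis
  proof cases
    case 1
    have excess_high: "cube_excess (36/13) \<le> cube_excess (2 * (1 + P l $ 3))" if "l \<in> {i, j}" for l
      using high[OF that] by (intro cube_excess_mono) auto
    have "51 < 756/25 + 2 * cube_excess (36/13)"
      by (simp add: cube_excess_def power2_eq_square)
    also have "\<dots> \<le> 756/25 + (\<Sum>l\<in>{i, j}. cube_excess (2 * (1 + P l $ 3)))"
      using assms(6) excess_high[of i] excess_high[of j] by simp
    also have "\<dots> \<le> energy 3 P"
      by (rule energy3_ge_heights[OF assms(1,2) ij])
    finally show ?thesis
      using 1 by simp
  next
    case 2
    have power_high: "(36/13) ^ k \<le> (2 * (1 + P l $ 3)) ^ k" if "l \<in> {i, j}" for l
      using high[OF that] by (intro power_mono) auto
    have "6 * 2 ^ k + 3 < 2 * (36/13 :: real) ^ k"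
      using 2 by (auto simp: eval_nat_numeral)
    also have "\<dots> \<le> (\<Sum>l\<in>{i, j}. (2 * (1 + P l $ 3)) ^ k)"
      using assms(6) power_high[of i] power_high[of j] by simp
    also have "\<dots> \<le> energy k P"
      by (rule energy_ge_heights[OF assms(1,2) ij])
    finally show ?thesis .
  qed
qed

theorem lemma2p2:
  fixes k :: nat and P :: "nat \<Rightarrow> real^3"
  assumes "k \<in> {3,4,5,6}"
    and "config5 P"
    and "normalized P"
    and "\<And>Q. config5 Q \<Longrightarrow> energy k P \<le> energy k Q"
  shows "norm (stereo (P 0)) < 4 \<and> (\<forall>i\<in>{1,2,3}. norm (stereo (P i)) < 3/2)"
proof -
  have pole: "P 4 = north" using assms(3) by (simp add: normalized_def)
  have on_sphere: "P i \<in> S2" if "i < 5" for i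
    using assms(2) that by (simp add: config5_def)
  have minimal: "energy k P \<le> 6 * 2 ^ k + 3"
    using assms(4)[OF config5_bipyramid] energy_bipyramid assms(1) by auto
  have "P 0 $ 3 < 15/17"
    using energy_gt_bipyramid_if_high[OF assms(2) pole assms(1), of 0] minimal by force
  then have "norm (stereo (P 0)) < 4"
    by (intro norm_stereo_less[where z = "15/17"] on_sphere) (auto simp: power2_eq_square)
  moreover have "norm (stereo (P i)) < 3/2" if i: "i \<in> {1,2,3}" for i
  proof -
    have "P i $ 3 < 5/13"
      using energy_gt_bipyramid_if_two_high[OF assms(2) pole assms(1), of 0 i]
        normalized_height_le[OF assms(2,3) i] minimal i by force
    then show ?thesis
      using i by (intro norm_stereo_less[where z = "5/13"] on_sphere) (auto simp: power2_eq_square)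
  qed
  ultimately show ?thesis by blast
qed

end
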